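(* Let $n\ge 2$, $p\in[0,1]$ and let $\Phi$ be the $\mathfrak{su}_n$ channel. Then $$S_{\min}:=\min_{\rho}S(\Phi(\rho))=-\frac{np}{n+1}\ln\Big(\frac{np}{n^2-1}\Big)-\Big(1-\frac{np}{n+1}\Big)\ln\Big(1-\frac{np}{n+1}\Big),$$ where the minimum is over all $n\times n$ density matrices and $S(\sigma)=-\operatorname{Tr}(\sigma\ln\sigma)$ is the von Neumann entropy (with $0\ln 0=0$). Moreover, for fixed $p\in[0,1]$, $\lim_{n\to\infty}S_{\min}/\ln n=p$.
   Context: The $\mathfrak{su}_n$ channel is $\Phi(\rho)=(1-p)\rho+\frac{pn}{2(n^2-1)}\sum_{i=1}^{n^2-1}X_i\rho X_i$, where $X_1,\dots,X_{n^2-1}$ are traceless Hermitian $n\times n$ matrices forming a basis of $i\,\mathfrak{su}_n$ with $\operatorname{Tr}(X_iX_j)=2\delta_{ij}$ (generalized Gell-Mann matrices). A density matrix is a positive semidefinite matrix of trace 1. *)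

theory Defs
  imports Complex_Main "Jordan_Normal_Form.Schur_Decomposition" "HOL-Computational_Algebra.Polynomial"
begin

definition mtrace :: "complex mat \<Rightarrow> complex" where
  "mtrace A = (\<Sum>i<dim_row A. A $$ (i, i))"

definition psd_mat :: "nat \<Rightarrow> complex mat \<Rightarrow> bool" where
  "psd_mat n A \<longleftrightarrow> A \<in> carrier_mat n n \<and> mat_adjoint A = A \<and>
     (\<forall>v \<in> carrier_vec n. 0 \<le> Re (conjugate v \<bullet> (A *\<^sub>v v)))"

definition density_mat :: "nat \<Rightarrow> complex mat \<Rightarrow> bool" where
  "density_mat n \<rho> \<longleftrightarrow> psd_mat n \<rho> \<and> mtrace \<rho> = 1"

definition xlnx :: "real \<Rightarrow> real" where
  "xlnx x = (if x = 0 then 0 else x * ln x)"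

definition eigenvalues_mset :: "complex mat \<Rightarrow> complex multiset" where
  "eigenvalues_mset A = proots (char_poly A)"

(* von Neumann entropy S(sigma) = - Tr(sigma ln sigma) = - sum_lambda lambda ln lambda *)
definition vN_entropy :: "complex mat \<Rightarrow> real" where
  "vN_entropy \<sigma> = - (\<Sum>x\<in>#eigenvalues_mset \<sigma>. xlnx (Re x))"

(* generalized Gell-Mann matrices (0-based indices), normalised Tr(X_i X_j) = 2 delta_ij *)
definition gm_sym :: "nat \<Rightarrow> nat \<Rightarrow> nat \<Rightarrow> complex mat" where
  "gm_sym n j k = mat n n (\<lambda>(a, b). if (a = j \<and> b = k) \<or> (a = k \<and> b = j) then 1 else 0)"

definition gm_asym :: "nat \<Rightarrow> nat \<Rightarrow> nat \<Rightarrow> complex mat" where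
  "gm_asym n j k = mat n n (\<lambda>(a, b). if a = j \<and> b = k then - \<i> else if a = k \<and> b = j then \<i> else 0)"

definition gm_diag :: "nat \<Rightarrow> nat \<Rightarrow> complex mat" where
  "gm_diag n l = mat n n (\<lambda>(a, b).
     if a = b \<and> a < l then complex_of_real (sqrt (2 / (real l * (real l + 1))))
     else if a = b \<and> a = l then - complex_of_real (real l * sqrt (2 / (real l * (real l + 1))))
     else 0)"

definition gell_mann :: "nat \<Rightarrow> complex mat set" where
  "gell_mann n = {gm_sym n j k | j k. j < k \<and> k < n} \<union> {gm_asym n j k | j k. j < k \<and> k < n}
     \<union> {gm_diag n l | l. 1 \<le> l \<and> l \<le> n - 1}"

definition su_channel :: "nat \<Rightarrow> real \<Rightarrow> complex mat \<Rightarrow> complex mat" where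
  "su_channel n p \<rho> =
     (complex_of_real (1 - p)) \<cdot>\<^sub>m \<rho> +
     (complex_of_real (p * real n / (2 * (real n ^ 2 - 1)))) \<cdot>\<^sub>m
       mat n n (\<lambda>ij. \<Sum>X\<in>gell_mann n. (X * \<rho> * X) $$ ij)"

definition S_min :: "nat \<Rightarrow> real \<Rightarrow> real" where
  "S_min n p = (INF \<rho>\<in>{\<rho>. density_mat n \<rho>}. vN_entropy (su_channel n p \<rho>))"

end

theory Submission
  imports Defs "HOL-Real_Asymp.Real_Asymp"
begin

(*
  The generalized Gell-Mann matrices satisfy the completeness relation
    sum_X X_ac X_db = 2 delta_ab delta_cd - (2/n) delta_ac delta_db,
  so sum_X X rho X = 2 Tr(rho) I - (2/n) rho and on density matrices the su_n channel is
  depolarizing: Phi(rho) = (1 - q - beta) rho + beta I with beta = n p / (n^2 - 1) and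
  q = (n - 1) beta = n p / (n + 1).  Hence the eigenvalues of Phi(rho) are r (1 - q) + (1 - r) beta,
  where r runs over the eigenvalues of rho (nonnegative, summing to 1; they are read off a Schur
  triangularisation).  Convexity of x ln x bounds the output entropy below by the entropy of the
  spectrum (1 - q, beta, ..., beta), which a pure input attains.  As n grows, the term
  -q ln beta ~ p ln n dominates this entropy.
*)

section \<open>Completeness relation of the generalized Gell-Mann matrices\<close>

definition gm_pairs :: "nat \<Rightarrow> (nat \<times> nat) set" where
  "gm_pairs n = {(j, k). j < k \<and> k < n}"

lemma finite_gm_pairs: "finite (gm_pairs n)"
  by (rule finite_subset[of _ "{..<n} \<times> {..<n}"]) (auto simp: gm_pairs_def)

lemma gell_mann_eq_images:
  "gell_mann n = (case_prod (gm_sym n) ` gm_pairs n \<union> case_prod (gm_asym n) ` gm_pairs n)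
     \<union> gm_diag n ` {1..<n}"
proof -
  have "{l. 1 \<le> l \<and> l \<le> n - 1} = {1..<n}" by auto
  then have "{gm_diag n l | l. 1 \<le> l \<and> l \<le> n - 1} = gm_diag n ` {1..<n}" by blast
  then show ?thesis unfolding gell_mann_def gm_pairs_def by (auto simp: image_def)
qed

lemma gell_mann_carrier: "X \<in> gell_mann n \<Longrightarrow> X \<in> carrier_mat n n"
  unfolding gell_mann_eq_images by (auto simp: gm_sym_def gm_asym_def gm_diag_def)

lemma index_gm_sym:
  "a < n \<Longrightarrow> c < n \<Longrightarrow>
     gm_sym n j k $$ (a, c) = (if (a = j \<and> c = k) \<or> (a = k \<and> c = j) then 1 else 0)"
  unfolding gm_sym_def by simp

lemma index_gm_asym:
  "a < n \<Longrightarrow> c < n \<Longrightarrow>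
     gm_asym n j k $$ (a, c) = (if a = j \<and> c = k then - \<i> else if a = k \<and> c = j then \<i> else 0)"
  unfolding gm_asym_def by simp

definition gm_diag_weight :: "nat \<Rightarrow> nat \<Rightarrow> real" where
  "gm_diag_weight l a = (if a < l then 1 else if a = l then - real l else 0)"

lemma index_gm_diag:
  "a < n \<Longrightarrow> c < n \<Longrightarrow> gm_diag n l $$ (a, c) =
     (if a = c then complex_of_real (gm_diag_weight l a * sqrt (2 / (real l * (real l + 1)))) else 0)"
  unfolding gm_diag_def gm_diag_weight_def by simp

lemma inj_on_gm_sym: "inj_on (case_prod (gm_sym n)) (gm_pairs n)"
proof (rule inj_onI, clarify)
  fix j k j' k' assume jk: "(j, k) \<in> gm_pairs n" "(j', k') \<in> gm_pairs n"
    and "gm_sym n j k = gm_sym n j' k'"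
  then have "gm_sym n j k $$ (j, k) = gm_sym n j' k' $$ (j, k)" by simp
  then show "j = j' \<and> k = k'" using jk by (auto simp: gm_pairs_def index_gm_sym split: if_splits)
qed

lemma inj_on_gm_asym: "inj_on (case_prod (gm_asym n)) (gm_pairs n)"
proof (rule inj_onI, clarify)
  fix j k j' k' assume jk: "(j, k) \<in> gm_pairs n" "(j', k') \<in> gm_pairs n"
    and "gm_asym n j k = gm_asym n j' k'"
  then have "gm_asym n j k $$ (j, k) = gm_asym n j' k' $$ (j, k)" by simp
  then show "j = j' \<and> k = k'" using jk by (auto simp: gm_pairs_def index_gm_asym split: if_splits)
qed

lemma inj_on_gm_diag: "inj_on (gm_diag n) {1..<n}"
proof -
  have "gm_diag n l \<noteq> gm_diag n l'" if "1 \<le> l" "l < l'" "l' < n" for l l'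
  proof
    assume "gm_diag n l = gm_diag n l'"
    then have "gm_diag n l $$ (l', l') = gm_diag n l' $$ (l', l')" by simp
    moreover have "sqrt (2 / (real l' * (real l' + 1))) > 0" using that by simp
    ultimately show False using that by (simp add: index_gm_diag gm_diag_weight_def)
  qed
  then show ?thesis
    by (intro inj_onI) (metis atLeastLessThan_iff linorder_neqE_nat)
qed

lemma gm_sym_asym_disjoint: "case_prod (gm_sym n) ` gm_pairs n \<inter> case_prod (gm_asym n) ` gm_pairs n = {}"
proof -
  have "gm_sym n j k \<noteq> gm_asym n j' k'" if "(j, k) \<in> gm_pairs n" "(j', k') \<in> gm_pairs n" for j k j' k'
  proof
    assume "gm_sym n j k = gm_asym n j' k'"
    then have "gm_sym n j k $$ (j', k') = gm_asym n j' k' $$ (j', k')" by simp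
    then show False using that by (auto simp: gm_pairs_def index_gm_sym index_gm_asym complex_eq_iff split: if_splits)
  qed
  then show ?thesis by fastforce
qed

lemma gm_offdiag_diag_disjoint:
  "(case_prod (gm_sym n) ` gm_pairs n \<union> case_prod (gm_asym n) ` gm_pairs n) \<inter> gm_diag n ` {1..<n} = {}"
proof -
  have "gm_diag n l \<noteq> gm_sym n j k" "gm_diag n l \<noteq> gm_asym n j k" if "(j, k) \<in> gm_pairs n" for j k l
  proof -
    have "gm_diag n l $$ (j, k) = 0" "gm_sym n j k $$ (j, k) \<noteq> 0" "gm_asym n j k $$ (j, k) \<noteq> 0"
      using that by (auto simp: gm_pairs_def index_gm_diag index_gm_sym index_gm_asym)
    then show "gm_diag n l \<noteq> gm_sym n j k" "gm_diag n l \<noteq> gm_asym n j k" by auto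
  qed
  then show ?thesis by fastforce
qed

lemma sum_gell_mann:
  "(\<Sum>X\<in>gell_mann n. f X) = (\<Sum>(j, k)\<in>gm_pairs n. f (gm_sym n j k) + f (gm_asym n j k))
     + (\<Sum>l\<in>{1..<n}. f (gm_diag n l))"
proof -
  have "(\<Sum>X\<in>gell_mann n. f X) = (\<Sum>X\<in>case_prod (gm_sym n) ` gm_pairs n. f X)
     + (\<Sum>X\<in>case_prod (gm_asym n) ` gm_pairs n. f X) + (\<Sum>X\<in>gm_diag n ` {1..<n}. f X)"
    unfolding gell_mann_eq_images
    using gm_sym_asym_disjoint gm_offdiag_diag_disjoint finite_gm_pairs
    by (simp add: sum.union_disjoint)
  also have "\<dots> = (\<Sum>(j, k)\<in>gm_pairs n. f (gm_sym n j k) + f (gm_asym n j k))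
     + (\<Sum>l\<in>{1..<n}. f (gm_diag n l))"
    using sum.reindex[OF inj_on_gm_sym, of f] sum.reindex[OF inj_on_gm_asym, of f]
      sum.reindex[OF inj_on_gm_diag, of f]
    by (simp add: sum.distrib case_prod_beta' o_def)
  finally show ?thesis .
qed

lemma gm_sym_asym_products:
  assumes "j < k" "a < n" "b < n" "c < n" "d < n"
  shows "gm_sym n j k $$ (a, c) * gm_sym n j k $$ (d, b) + gm_asym n j k $$ (a, c) * gm_asym n j k $$ (d, b)
     = (if d = c \<and> b = a \<and> ((j, k) = (a, c) \<or> (j, k) = (c, a)) then 2 else 0)"
  using assms by (auto simp: index_gm_sym index_gm_asym)

lemma gm_offdiag_completeness:
  assumes abcd: "a < n" "b < n" "c < n" "d < n"
  shows "(\<Sum>(j, k)\<in>gm_pairs n. gm_sym n j k $$ (a, c) * gm_sym n j k $$ (d, b)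
           + gm_asym n j k $$ (a, c) * gm_asym n j k $$ (d, b))
         = (if a \<noteq> c \<and> d = c \<and> b = a then 2 else 0)"
proof -
  define T :: complex where "T = (if d = c \<and> b = a then 2 else 0)"
  have "(\<Sum>(j, k)\<in>gm_pairs n. gm_sym n j k $$ (a, c) * gm_sym n j k $$ (d, b)
          + gm_asym n j k $$ (a, c) * gm_asym n j k $$ (d, b))
      = (\<Sum>x\<in>gm_pairs n. (if x = (a, c) then T else 0) + (if x = (c, a) then T else 0))"
  proof (intro sum.cong refl, clarify)
    fix j k assume "(j, k) \<in> gm_pairs n"
    then have "j < k" by (simp add: gm_pairs_def)
    then show "gm_sym n j k $$ (a, c) * gm_sym n j k $$ (d, b) + gm_asym n j k $$ (a, c) * gm_asym n j k $$ (d, b)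
        = (if (j, k) = (a, c) then T else 0) + (if (j, k) = (c, a) then T else 0)"
      unfolding gm_sym_asym_products[OF \<open>j < k\<close> abcd] T_def by auto
  qed
  also have "\<dots> = (if (a, c) \<in> gm_pairs n then T else 0) + (if (c, a) \<in> gm_pairs n then T else 0)"
    by (simp add: sum.distrib finite_gm_pairs)
  finally show ?thesis
    using abcd by (auto simp: gm_pairs_def T_def)
qed

lemma gm_diag_weight_sum:
  assumes "a < n" "b < n"
  shows "(\<Sum>l\<in>{1..<n}. gm_diag_weight l a * gm_diag_weight l b * (2 / (real l * (real l + 1))))
           = (if a = b then 2 else 0) - 2 / real n"
  using assms
proof (induction n arbitrary: a b)
  case 0
  then show ?case by simp
next
  case (Suc m)
  let ?w = "\<lambda>l. gm_diag_weight l a * gm_diag_weight l b * (2 / (real l * (real l + 1)))"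
  have split: "(\<Sum>l\<in>{1..<Suc m}. ?w l) = (\<Sum>l\<in>{1..<m}. ?w l) + (if m = 0 then 0 else ?w m)"
    by (cases m) (auto simp: add.commute)
  show ?case
  proof (cases "a < m \<and> b < m")
    case True
    then have "m \<noteq> 0" by auto
    then have "2 / (real m * (real m + 1)) - 2 / real m = - 2 / (real m + 1)"
      by (simp add: divide_simps)
    then show ?thesis
      using True Suc.IH[of a b] by (simp add: split gm_diag_weight_def)
  next
    case False
    then have "a = m \<or> b = m" using Suc.prems by auto
    then have init: "(\<Sum>l\<in>{1..<m}. ?w l) = 0"
      by (auto intro!: sum.neutral simp: gm_diag_weight_def)
    have "real m * (2 / (real m * (real m + 1))) = 2 / (real m + 1)"
      and "real m * real m * (2 / (real m * (real m + 1))) = 2 - 2 / (real m + 1)" if "m \<noteq> 0"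
      using that by (simp_all add: divide_simps)
    then have last: "(if m = 0 then 0 else ?w m) = (if a = b then 2 else 0) - 2 / (real m + 1)"
      using \<open>a = m \<or> b = m\<close> Suc.prems by (auto simp: gm_diag_weight_def)
    have "(\<Sum>l\<in>{1..<Suc m}. ?w l) = (if a = b then 2 else 0) - 2 / (real m + 1)"
      by (simp only: split init last add_0)
    then show ?thesis by simp
  qed
qed

lemma gm_diag_index_product:
  assumes "a < n" "b < n" "c < n" "d < n"
  shows "gm_diag n l $$ (a, c) * gm_diag n l $$ (d, b) = (if a = c \<and> d = b then
    complex_of_real (gm_diag_weight l a * gm_diag_weight l d * (2 / (real l * (real l + 1)))) else 0)"
proof -
  define s where "s = sqrt (2 / (real l * (real l + 1)))"
  have "gm_diag n l $$ (a, c) * gm_diag n l $$ (d, b) = (if a = c \<and> d = b then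
      complex_of_real (gm_diag_weight l a * s) * complex_of_real (gm_diag_weight l d * s) else 0)"
    using assms by (simp add: index_gm_diag s_def)
  also have "complex_of_real (gm_diag_weight l a * s) * complex_of_real (gm_diag_weight l d * s)
      = complex_of_real (gm_diag_weight l a * gm_diag_weight l d * (s * s))"
    by (simp add: algebra_simps)
  also have "s * s = 2 / (real l * (real l + 1))" unfolding s_def by simp
  finally show ?thesis .
qed

lemma gm_diag_completeness:
  assumes abcd: "a < n" "b < n" "c < n" "d < n"
  shows "(\<Sum>l\<in>{1..<n}. gm_diag n l $$ (a, c) * gm_diag n l $$ (d, b))
           = (if a = c \<and> d = b then (if a = d then 2 else 0) - 2 / of_nat n else 0)"
proof -
  have "(\<Sum>l\<in>{1..<n}. gm_diag n l $$ (a, c) * gm_diag n l $$ (d, b))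
      = (if a = c \<and> d = b then (\<Sum>l\<in>{1..<n}. complex_of_real
           (gm_diag_weight l a * gm_diag_weight l d * (2 / (real l * (real l + 1))))) else 0)"
    using abcd by (auto simp: gm_diag_index_product)
  also have "\<dots> = (if a = c \<and> d = b then complex_of_real ((if a = d then 2 else 0) - 2 / real n) else 0)"
    by (simp only: of_real_sum[symmetric] gm_diag_weight_sum[OF abcd(1) abcd(4)])
  finally show ?thesis by simp
qed

lemma gell_mann_completeness:
  assumes "a < n" "b < n" "c < n" "d < n"
  shows "(\<Sum>X\<in>gell_mann n. X $$ (a, c) * X $$ (d, b)) =
    (if a = b \<and> c = d then 2 else 0) - (if a = c \<and> d = b then 2 / of_nat n else 0)"
  unfolding sum_gell_mann[where f = "\<lambda>X. X $$ (a, c) * X $$ (d, b)"]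
    gm_offdiag_completeness[OF assms] gm_diag_completeness[OF assms]
  by auto

lemma index_mult_mat_3:
  assumes "A \<in> carrier_mat n n" "B \<in> carrier_mat n n" "C \<in> carrier_mat n n" "a < n" "b < n"
  shows "(A * B * C) $$ (a, b) = (\<Sum>c<n. \<Sum>d<n. A $$ (a, c) * B $$ (c, d) * C $$ (d, b))"
proof -
  have "(A * B * C) $$ (a, b) = (\<Sum>c<n. A $$ (a, c) * (\<Sum>d<n. B $$ (c, d) * C $$ (d, b)))"
    using assms by (simp add: scalar_prod_def lessThan_atLeast0)
  then show ?thesis by (simp add: sum_distrib_left mult.assoc)
qed

lemma gell_mann_twirl:
  assumes R: "R \<in> carrier_mat n n"
  shows "mat n n (\<lambda>ij. \<Sum>X\<in>gell_mann n. (X * R * X) $$ ij)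
           = (2 * mtrace R) \<cdot>\<^sub>m 1\<^sub>m n - (2 / of_nat n) \<cdot>\<^sub>m R"
proof (rule eq_matI)
  fix a b assume "a < dim_row ((2 * mtrace R) \<cdot>\<^sub>m 1\<^sub>m n - (2 / of_nat n) \<cdot>\<^sub>m R)"
    "b < dim_col ((2 * mtrace R) \<cdot>\<^sub>m 1\<^sub>m n - (2 / of_nat n) \<cdot>\<^sub>m R)"
  then have ab: "a < n" "b < n" using R by auto
  have "(\<Sum>X\<in>gell_mann n. (X * R * X) $$ (a, b))
      = (\<Sum>X\<in>gell_mann n. \<Sum>c<n. \<Sum>d<n. X $$ (a, c) * R $$ (c, d) * X $$ (d, b))"
    using gell_mann_carrier R ab by (intro sum.cong refl index_mult_mat_3) auto
  also have "\<dots> = (\<Sum>c<n. \<Sum>X\<in>gell_mann n. \<Sum>d<n. X $$ (a, c) * R $$ (c, d) * X $$ (d, b))"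
    by (rule sum.swap)
  also have "\<dots> = (\<Sum>c<n. \<Sum>d<n. \<Sum>X\<in>gell_mann n. X $$ (a, c) * R $$ (c, d) * X $$ (d, b))"
    by (rule sum.cong[OF refl], rule sum.swap)
  also have "\<dots> = (\<Sum>c<n. \<Sum>d<n. R $$ (c, d) * (\<Sum>X\<in>gell_mann n. X $$ (a, c) * X $$ (d, b)))"
    by (simp add: sum_distrib_left ac_simps)
  also have "\<dots> = (\<Sum>c<n. \<Sum>d<n. (if d = c then (if a = b then 2 * R $$ (c, c) else 0) else 0)
      - (if d = b then (if c = a then 2 / of_nat n * R $$ (a, b) else 0) else 0))"
  proof (intro sum.cong refl)
    fix c d assume "c \<in> {..<n}" "d \<in> {..<n}"
    then show "R $$ (c, d) * (\<Sum>X\<in>gell_mann n. X $$ (a, c) * X $$ (d, b))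
      = (if d = c then (if a = b then 2 * R $$ (c, c) else 0) else 0)
        - (if d = b then (if c = a then 2 / of_nat n * R $$ (a, b) else 0) else 0)"
      using ab by (auto simp: gell_mann_completeness algebra_simps)
  qed
  also have "\<dots> = (if a = b then 2 * mtrace R else 0) - 2 / of_nat n * R $$ (a, b)"
    using ab R by (simp add: sum_subtractf sum.delta' mtrace_def sum_distrib_left)
  finally show "mat n n (\<lambda>ij. \<Sum>X\<in>gell_mann n. (X * R * X) $$ ij) $$ (a, b)
      = ((2 * mtrace R) \<cdot>\<^sub>m 1\<^sub>m n - (2 / of_nat n) \<cdot>\<^sub>m R) $$ (a, b)"
    using ab R by simp
qed (use R in auto)

section \<open>The su_n channel as a depolarizing channel\<close>

(* A pure input is mapped to the spectrum (1 - q, beta, ..., beta),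
   where beta = su_identity_weight n p and q = su_pure_loss n p = (n - 1) beta. *)
definition su_identity_weight :: "nat \<Rightarrow> real \<Rightarrow> real" where
  "su_identity_weight n p = real n * p / (real n ^ 2 - 1)"

definition su_pure_loss :: "nat \<Rightarrow> real \<Rightarrow> real" where
  "su_pure_loss n p = real n * p / (real n + 1)"

lemma su_channel_depolarizing:
  assumes n: "n \<ge> 2" and R: "R \<in> carrier_mat n n" and tr: "mtrace R = 1"
  shows "su_channel n p R =
    complex_of_real (1 - su_pure_loss n p - su_identity_weight n p) \<cdot>\<^sub>m R
      + complex_of_real (su_identity_weight n p) \<cdot>\<^sub>m 1\<^sub>m n"
proof -
  define c where "c = p * real n / (2 * (real n ^ 2 - 1))"
  have fac: "real n ^ 2 - 1 = (real n - 1) * (real n + 1)"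
    by (simp add: algebra_simps power2_eq_square)
  have "real n - 1 > 0" using n by simp
  then have r1: "1 - p - c * (2 / real n) = 1 - su_pure_loss n p - su_identity_weight n p"
    and r2: "c * 2 = su_identity_weight n p"
    unfolding c_def su_pure_loss_def su_identity_weight_def fac
    by (simp_all add: divide_simps) (simp_all add: algebra_simps)
  have coeffs: "complex_of_real (1 - p) - complex_of_real c * (2 / of_nat n)
        = complex_of_real (1 - su_pure_loss n p - su_identity_weight n p)"
      "complex_of_real c * 2 = complex_of_real (su_identity_weight n p)"
    using arg_cong[OF r1, of complex_of_real] arg_cong[OF r2, of complex_of_real] by simp_all
  have "su_channel n p R = complex_of_real (1 - p) \<cdot>\<^sub>m R
      + complex_of_real c \<cdot>\<^sub>m ((2 * mtrace R) \<cdot>\<^sub>m 1\<^sub>m n - (2 / of_nat n) \<cdot>\<^sub>m R)"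
    unfolding su_channel_def gell_mann_twirl[OF R] c_def by (simp add: mult.commute)
  also have "\<dots> = complex_of_real (1 - su_pure_loss n p - su_identity_weight n p) \<cdot>\<^sub>m R
      + complex_of_real (su_identity_weight n p) \<cdot>\<^sub>m 1\<^sub>m n"
    using R tr coeffs by (intro eq_matI) (auto simp: algebra_simps)
  finally show ?thesis .
qed

lemma su_pure_loss_eq:
  assumes "n \<ge> 2"
  shows "su_pure_loss n p = (real n - 1) * su_identity_weight n p"
proof -
  have "real n - 1 > 0" using assms by simp
  moreover have "real n ^ 2 - 1 = (real n - 1) * (real n + 1)"
    by (simp add: algebra_simps power2_eq_square)
  ultimately show ?thesis unfolding su_pure_loss_def su_identity_weight_def by (simp add: divide_simps)
qed

lemma su_weights_bounds:
  assumes "n \<ge> 2" "0 \<le> p" "p \<le> 1"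
  shows "0 \<le> su_identity_weight n p" and "su_pure_loss n p \<le> 1"
proof -
  have "real n ^ 2 \<ge> 1" using assms(1) by (simp add: one_le_power)
  then show "0 \<le> su_identity_weight n p"
    using assms unfolding su_identity_weight_def by simp
  have "real n * p \<le> real n * 1" using assms by (intro mult_left_mono) auto
  then have "real n * p \<le> real n + 1" by simp
  then show "su_pure_loss n p \<le> 1" unfolding su_pure_loss_def by simp
qed

section \<open>Spectra of affine images of a matrix\<close>

lemma mtrace_mult_comm:
  assumes "A \<in> carrier_mat n m" "B \<in> carrier_mat m n"
  shows "mtrace (A * B) = mtrace (B * A)"
proof -
  have "mtrace (A * B) = (\<Sum>i<n. \<Sum>k<m. A $$ (i, k) * B $$ (k, i))"
    unfolding mtrace_def using assms by (auto intro!: sum.cong simp: scalar_prod_def lessThan_atLeast0)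
  also have "\<dots> = (\<Sum>k<m. \<Sum>i<n. B $$ (k, i) * A $$ (i, k))"
    by (subst sum.swap) (simp add: mult.commute)
  also have "\<dots> = mtrace (B * A)"
    unfolding mtrace_def using assms by (auto intro!: sum.cong simp: scalar_prod_def lessThan_atLeast0)
  finally show ?thesis .
qed

lemma mtrace_similar_mat_wit:
  assumes "similar_mat_wit A B P Q"
  shows "mtrace A = mtrace B"
proof -
  obtain n where PQ: "Q * P = 1\<^sub>m n" "A = P * B * Q" and
    carr: "B \<in> carrier_mat n n" "P \<in> carrier_mat n n" "Q \<in> carrier_mat n n"
    using similar_mat_witD[OF refl assms] by blast
  have "mtrace A = mtrace ((P * B) * Q)" using PQ by simp
  also have "\<dots> = mtrace (Q * (P * B))" using carr by (intro mtrace_mult_comm) auto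
  also have "Q * (P * B) = B" using carr PQ by (simp flip: assoc_mult_mat[of Q n n P n B n])
  finally show ?thesis .
qed

lemma mtrace_eq_sum_diag_mat: "mtrace A = sum_list (diag_mat A)"
  unfolding mtrace_def diag_mat_def by (simp add: sum_list_sum_nth lessThan_atLeast0)

lemma similar_mat_wit_affine:
  fixes A :: "'a :: comm_ring_1 mat"
  assumes "similar_mat_wit A B P Q" "A \<in> carrier_mat n n"
  shows "similar_mat_wit (a \<cdot>\<^sub>m A + b \<cdot>\<^sub>m 1\<^sub>m n) (a \<cdot>\<^sub>m B + b \<cdot>\<^sub>m 1\<^sub>m n) P Q"
proof -
  note wit = similar_mat_witD2[OF assms(2,1)]
  have "P * (a \<cdot>\<^sub>m B + b \<cdot>\<^sub>m 1\<^sub>m n) = P * (a \<cdot>\<^sub>m B) + P * (b \<cdot>\<^sub>m 1\<^sub>m n)"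
    using wit by (intro mult_add_distrib_mat) auto
  also have "\<dots> = a \<cdot>\<^sub>m (P * B) + b \<cdot>\<^sub>m P"
    using wit by (simp add: mult_smult_distrib[of P n n _ n])
  finally have "P * (a \<cdot>\<^sub>m B + b \<cdot>\<^sub>m 1\<^sub>m n) * Q = (a \<cdot>\<^sub>m (P * B) + b \<cdot>\<^sub>m P) * Q"
    by simp
  also have "\<dots> = a \<cdot>\<^sub>m (P * B * Q) + b \<cdot>\<^sub>m (P * Q)"
    using wit by (simp add: add_mult_distrib_mat[of _ n n _ _ n] mult_smult_assoc_mat[of _ n n _ n])
  finally show ?thesis
    using wit by (intro similar_mat_witI[of P Q n]) auto
qed

lemma proots_prod_linear: "proots (\<Prod>a\<leftarrow>xs. [:- a, 1:]) = mset (xs :: 'a :: idom list)"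
proof (induction xs)
  case (Cons x xs)
  have "(\<Prod>a\<leftarrow>xs. [:- a, 1:]) \<noteq> 0" by (auto simp: prod_list_zero_iff)
  then show ?case using Cons by (simp add: proots_mult del: mult_pCons_left)
qed simp

lemma
  fixes A :: "complex mat"
  assumes A: "A \<in> carrier_mat n n" and cp: "char_poly A = (\<Prod>x\<leftarrow>es. [:- x, 1:])"
  shows mtrace_eq_sum_roots: "mtrace A = sum_list es"
    and eigenvalues_mset_affine:
      "eigenvalues_mset (a \<cdot>\<^sub>m A + b \<cdot>\<^sub>m 1\<^sub>m n) = mset (map (\<lambda>x. a * x + b) es)"
proof -
  obtain B P Q where "schur_decomposition A es = (B, P, Q)" by (cases "schur_decomposition A es")
  with schur_decomposition[OF A cp] have wit: "similar_mat_wit A B P Q"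
    and B: "upper_triangular B" "diag_mat B = es" by auto
  have Bc: "B \<in> carrier_mat n n" using similar_mat_witD2[OF A wit] by simp
  show "mtrace A = sum_list es"
    using mtrace_similar_mat_wit[OF wit] mtrace_eq_sum_diag_mat B by simp
  let ?M = "a \<cdot>\<^sub>m B + b \<cdot>\<^sub>m 1\<^sub>m n"
  have "char_poly (a \<cdot>\<^sub>m A + b \<cdot>\<^sub>m 1\<^sub>m n) = char_poly ?M"
    using similar_mat_wit_affine[OF wit A] by (intro char_poly_similar) (auto simp: similar_mat_def)
  also have "\<dots> = (\<Prod>x\<leftarrow>diag_mat ?M. [:- x, 1:])"
    using Bc B by (intro char_poly_upper_triangular[of _ n]) (auto simp: upper_triangular_def)
  also have "diag_mat ?M = map (\<lambda>x. a * x + b) es"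
    using Bc B by (auto simp: diag_mat_def)
  finally have "char_poly (a \<cdot>\<^sub>m A + b \<cdot>\<^sub>m 1\<^sub>m n) = (\<Prod>x\<leftarrow>map (\<lambda>x. a * x + b) es. [:- x, 1:])" .
  then show "eigenvalues_mset (a \<cdot>\<^sub>m A + b \<cdot>\<^sub>m 1\<^sub>m n) = mset (map (\<lambda>x. a * x + b) es)"
    unfolding eigenvalues_mset_def by (simp only: proots_prod_linear)
qed

lemma psd_mat_root_Re_nonneg:
  assumes P: "psd_mat n A" and cp: "char_poly A = (\<Prod>a\<leftarrow>es. [:- a, 1:])" and x: "x \<in> set es"
  shows "Re x \<ge> 0"
proof -
  have A: "A \<in> carrier_mat n n" using P unfolding psd_mat_def by auto
  have "poly (char_poly A) x = 0" unfolding cp poly_prod_list using x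
    by (auto simp: prod_list_zero_iff)
  then obtain v where v: "v \<in> carrier_vec n" "v \<noteq> 0\<^sub>v n" "A *\<^sub>v v = x \<cdot>\<^sub>v v"
    using eigenvalue_root_char_poly[OF A] A unfolding eigenvalue_def eigenvector_def by auto
  have "0 \<le> Re (conjugate v \<bullet> (A *\<^sub>v v))" using P v unfolding psd_mat_def by auto
  also have "conjugate v \<bullet> (A *\<^sub>v v) = x * (v \<bullet>c v)"
    using v conjugate_vec_sprod_comm[OF v(1) v(1)] by simp
  finally have "0 \<le> Re (x * (v \<bullet>c v))" .
  moreover have "v \<bullet>c v > 0" using v by simp
  ultimately show ?thesis by (auto simp: less_complex_def zero_le_mult_iff)
qed

section \<open>Convexity of x ln x\<close>

lemma xlnx_tangent_le:
  assumes z: "z > 0" and w: "w \<ge> 0"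
  shows "z * ln z + (ln z + 1) * (w - z) \<le> xlnx w"
proof (cases "w = 0")
  case True
  then show ?thesis using z by (simp add: xlnx_def algebra_simps)
next
  case False
  then have w: "w > 0" using w by simp
  have "ln (z / w) \<le> z / w - 1" using z w by (intro ln_le_minus_one) simp
  then have "w * (ln z - ln w) \<le> z - w" using z w by (simp add: ln_div field_simps)
  then show ?thesis using w by (simp add: xlnx_def algebra_simps)
qed

lemma xlnx_convex:
  assumes x: "x \<ge> 0" and y: "y \<ge> 0" and t: "0 \<le> t" "t \<le> 1"
  shows "xlnx (t * x + (1 - t) * y) \<le> t * xlnx x + (1 - t) * xlnx y"
proof -
  define z where "z = t * x + (1 - t) * y"
  have "t * x \<ge> 0" "(1 - t) * y \<ge> 0" using x y t by simp_all
  show ?thesis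
  proof (cases "z = 0")
    case True
    then have "t * x = 0" "(1 - t) * y = 0" using \<open>t * x \<ge> 0\<close> \<open>(1 - t) * y \<ge> 0\<close>
      unfolding z_def by linarith+
    then show ?thesis using True by (auto simp: xlnx_def z_def)
  next
    case False
    then have z: "z > 0" using \<open>t * x \<ge> 0\<close> \<open>(1 - t) * y \<ge> 0\<close> unfolding z_def by linarith
    have "t * (z * ln z + (ln z + 1) * (x - z)) + (1 - t) * (z * ln z + (ln z + 1) * (y - z))
        \<le> t * xlnx x + (1 - t) * xlnx y"
      using t by (intro add_mono mult_left_mono xlnx_tangent_le z x y) simp_all
    moreover have "t * (z * ln z + (ln z + 1) * (x - z)) + (1 - t) * (z * ln z + (ln z + 1) * (y - z))
        = xlnx z"
      using z unfolding z_def by (simp add: xlnx_def algebra_simps)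
    ultimately show ?thesis by (simp add: z_def)
  qed
qed

lemma sum_list_xlnx_affine_le:
  fixes rs :: "real list"
  assumes nonneg: "\<forall>r\<in>set rs. r \<ge> 0" and sum1: "sum_list rs = 1" and "a + b \<ge> 0" "b \<ge> 0"
  shows "(\<Sum>r\<leftarrow>rs. xlnx (a * r + b)) \<le> xlnx (a + b) + (real (length rs) - 1) * xlnx b"
proof -
  have "(\<Sum>r\<leftarrow>rs. xlnx (a * r + b)) \<le> (\<Sum>r\<leftarrow>rs. r * xlnx (a + b) + (1 - r) * xlnx b)"
  proof (rule sum_list_mono)
    fix r assume r: "r \<in> set rs"
    have "r \<le> sum_list rs" using nonneg r by (intro member_le_sum_list) auto
    then have "xlnx (r * (a + b) + (1 - r) * b) \<le> r * xlnx (a + b) + (1 - r) * xlnx b"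
      using nonneg r sum1 assms by (intro xlnx_convex) auto
    then show "xlnx (a * r + b) \<le> r * xlnx (a + b) + (1 - r) * xlnx b"
      by (simp add: algebra_simps)
  qed
  also have "\<dots> = sum_list rs * xlnx (a + b) + (real (length rs) - sum_list rs) * xlnx b"
    by (induction rs) (simp_all add: algebra_simps)
  also have "\<dots> = xlnx (a + b) + (real (length rs) - 1) * xlnx b"
    using sum1 by simp
  finally show ?thesis .
qed

section \<open>Minimal output entropy\<close>

lemma vN_entropy_affine:
  assumes "A \<in> carrier_mat n n" and "char_poly A = (\<Prod>x\<leftarrow>es. [:- x, 1:])"
  shows "vN_entropy (complex_of_real a \<cdot>\<^sub>m A + complex_of_real b \<cdot>\<^sub>m 1\<^sub>m n)
           = - (\<Sum>x\<leftarrow>es. xlnx (a * Re x + b))"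
  unfolding vN_entropy_def eigenvalues_mset_affine[OF assms]
  by (simp add: sum_mset_sum_list o_def flip: mset_map)

lemma su_closed_form_eq_xlnx:
  fixes p :: real
  assumes "n \<ge> 2"
  defines "q \<equiv> su_pure_loss n p" and "\<beta> \<equiv> su_identity_weight n p"
  shows "- q * ln \<beta> - (1 - q) * ln (1 - q) = - (xlnx (1 - q) + (real n - 1) * xlnx \<beta>)"
proof -
  have "(real n - 1) * xlnx \<beta> = q * ln \<beta>"
    using su_pure_loss_eq[OF assms(1), of p] unfolding q_def \<beta>_def by (simp add: xlnx_def)
  moreover have "xlnx (1 - q) = (1 - q) * ln (1 - q)" by (simp add: xlnx_def)
  ultimately show ?thesis by simp
qed

lemma vN_entropy_su_channel:
  fixes p :: real
  assumes "n \<ge> 2" and R: "R \<in> carrier_mat n n" "mtrace R = 1"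
    and cp: "char_poly R = (\<Prod>x\<leftarrow>es. [:- x, 1:])"
  defines "q \<equiv> su_pure_loss n p" and "\<beta> \<equiv> su_identity_weight n p"
  shows "vN_entropy (su_channel n p R) = - (\<Sum>x\<leftarrow>es. xlnx ((1 - q - \<beta>) * Re x + \<beta>))"
  unfolding su_channel_depolarizing[OF assms(1) R] q_def \<beta>_def
  by (rule vN_entropy_affine[OF R(1) cp])

lemma su_channel_entropy_ge:
  assumes n: "n \<ge> 2" and p: "0 \<le> p" "p \<le> 1" and \<rho>: "density_mat n \<rho>"
  defines "q \<equiv> su_pure_loss n p" and "\<beta> \<equiv> su_identity_weight n p"
  shows "- q * ln \<beta> - (1 - q) * ln (1 - q) \<le> vN_entropy (su_channel n p \<rho>)"
proof -
  have psd: "psd_mat n \<rho>" and tr: "mtrace \<rho> = 1" and R: "\<rho> \<in> carrier_mat n n"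
    using \<rho> unfolding density_mat_def psd_mat_def by auto
  obtain es where cp: "char_poly \<rho> = (\<Prod>x\<leftarrow>es. [:- x, 1:])" and len: "length es = n"
    using char_poly_factorized[OF R] by blast
  have "\<forall>r\<in>set (map Re es). r \<ge> 0" using psd_mat_root_Re_nonneg[OF psd cp] by auto
  moreover have "sum_list (map Re es) = Re (sum_list es)" by (induction es) auto
  then have "sum_list (map Re es) = 1" using mtrace_eq_sum_roots[OF R cp] tr by simp
  moreover have "0 \<le> (1 - q - \<beta>) + \<beta>" "0 \<le> \<beta>"
    using su_weights_bounds[OF n p] unfolding q_def \<beta>_def by auto
  ultimately have "(\<Sum>r\<leftarrow>map Re es. xlnx ((1 - q - \<beta>) * r + \<beta>))
      \<le> xlnx ((1 - q - \<beta>) + \<beta>) + (real (length (map Re es)) - 1) * xlnx \<beta>"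
    by (rule sum_list_xlnx_affine_le)
  then have "(\<Sum>r\<leftarrow>map Re es. xlnx ((1 - q - \<beta>) * r + \<beta>))
      \<le> xlnx (1 - q) + (real n - 1) * xlnx \<beta>"
    using len by simp
  then show ?thesis
    unfolding vN_entropy_su_channel[OF n R tr cp] su_closed_form_eq_xlnx[OF n] q_def \<beta>_def
    by (simp add: o_def)
qed

definition proj_e0 :: "nat \<Rightarrow> complex mat" where
  "proj_e0 n = mat n n (\<lambda>(i, j). if i = 0 \<and> j = 0 then 1 else 0)"

lemma density_mat_proj_e0:
  assumes "n \<ge> 1"
  shows "density_mat n (proj_e0 n)"
proof -
  have "proj_e0 n *\<^sub>v v = vec n (\<lambda>i. if i = 0 then v $ 0 else 0)" if "v \<in> carrier_vec n" for v
    using that assms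
    by (intro eq_vecI) (auto simp: proj_e0_def scalar_prod_def if_distrib[of "\<lambda>x. x * _"] sum.delta'
        cong: if_cong)
  then have "conjugate v \<bullet> (proj_e0 n *\<^sub>v v) = cnj (v $ 0) * v $ 0" if "v \<in> carrier_vec n" for v
    using that assms
    by (simp add: scalar_prod_def if_distrib[of "\<lambda>x. _ * x"] sum.delta' cong: if_cong)
  moreover have "mat_adjoint (proj_e0 n) = proj_e0 n"
    unfolding mat_adjoint_def proj_e0_def by (rule eq_matI) (auto simp: mat_of_rows_index)
  moreover have "mtrace (proj_e0 n) = 1"
    using assms unfolding mtrace_def proj_e0_def by (simp add: sum.delta' cong: if_cong)
  ultimately show ?thesis
    unfolding density_mat_def psd_mat_def by (auto simp: proj_e0_def)
qed

lemma su_channel_entropy_proj_e0: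
  fixes p :: real
  assumes n: "n \<ge> 2"
  defines "q \<equiv> su_pure_loss n p" and "\<beta> \<equiv> su_identity_weight n p"
  shows "vN_entropy (su_channel n p (proj_e0 n)) = - q * ln \<beta> - (1 - q) * ln (1 - q)"
proof -
  have R: "proj_e0 n \<in> carrier_mat n n" "mtrace (proj_e0 n) = 1"
    using density_mat_proj_e0[of n] n unfolding density_mat_def psd_mat_def by auto
  have "upper_triangular (proj_e0 n)" unfolding upper_triangular_def proj_e0_def by auto
  then have cp: "char_poly (proj_e0 n) = (\<Prod>x\<leftarrow>diag_mat (proj_e0 n). [:- x, 1:])"
    using R by (intro char_poly_upper_triangular) auto
  have "diag_mat (proj_e0 n) = 1 # replicate (n - 1) 0"
    using n by (intro nth_equalityI) (auto simp: diag_mat_def proj_e0_def nth_Cons split: nat.split)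
  then show ?thesis
    unfolding vN_entropy_su_channel[OF n R cp] su_closed_form_eq_xlnx[OF n] q_def \<beta>_def
    using n by (simp add: sum_list_replicate of_nat_diff)
qed

lemma S_min_eq_closed_form:
  assumes n: "n \<ge> 2" and p: "0 \<le> p" "p \<le> 1"
  defines "q \<equiv> su_pure_loss n p" and "\<beta> \<equiv> su_identity_weight n p"
  shows "S_min n p = - q * ln \<beta> - (1 - q) * ln (1 - q)"
  unfolding S_min_def
proof (rule cInf_eq_minimum)
  show "- q * ln \<beta> - (1 - q) * ln (1 - q) \<in> (\<lambda>\<rho>. vN_entropy (su_channel n p \<rho>)) ` {\<rho>. density_mat n \<rho>}"
    using density_mat_proj_e0[of n] su_channel_entropy_proj_e0[OF n, of p] n
    unfolding q_def \<beta>_def by force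
qed (use su_channel_entropy_ge[OF n p] in \<open>auto simp: q_def \<beta>_def\<close>)

lemma su_closed_form_over_ln_tendsto:
  fixes p :: real
  assumes "0 \<le> p" "p \<le> 1"
  shows "(\<lambda>n. (- su_pure_loss n p * ln (su_identity_weight n p)
      - (1 - su_pure_loss n p) * ln (1 - su_pure_loss n p)) / ln (real n)) \<longlonglongrightarrow> p"
proof -
  \<comment> \<open>real_asymp needs the signs of p and 1 - p to be known\<close>
  consider "p = 0" | "p = 1" | "0 < p" "p < 1" using assms by linarith
  then show ?thesis
  proof cases
    case 1
    then show ?thesis by (simp add: su_pure_loss_def su_identity_weight_def)
  next
    case 2
    then show ?thesis unfolding su_pure_loss_def su_identity_weight_def by simp real_asymp
  next
    case 3
    then show ?thesis unfolding su_pure_loss_def su_identity_weight_def by real_asymp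
  qed
qed

theorem mainTheorem3:
  fixes p :: real
  assumes "0 \<le> p" and "p \<le> 1"
  shows "(\<forall>n::nat. n \<ge> 2 \<longrightarrow>
           (let q = real n * p / (real n + 1);
                F = - q * ln (real n * p / (real n ^ 2 - 1)) - (1 - q) * ln (1 - q)
            in (\<exists>\<rho>. density_mat n \<rho> \<and> vN_entropy (su_channel n p \<rho>) = F)
               \<and> (\<forall>\<rho>. density_mat n \<rho> \<longrightarrow> F \<le> vN_entropy (su_channel n p \<rho>))
               \<and> S_min n p = F))
         \<and> ((\<lambda>n. S_min n p / ln (real n)) \<longlonglongrightarrow> p)"
  unfolding Let_def su_pure_loss_def[symmetric] su_identity_weight_def[symmetric]
proof (intro conjI allI impI)
  fix n :: nat assume n: "n \<ge> 2"
  show "\<exists>\<rho>. density_mat n \<rho> \<and> vN_entropy (su_channel n p \<rho>) =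
      - su_pure_loss n p * ln (su_identity_weight n p) - (1 - su_pure_loss n p) * ln (1 - su_pure_loss n p)"
    using density_mat_proj_e0[of n] su_channel_entropy_proj_e0[OF n] n by auto
  show "\<And>\<rho>. density_mat n \<rho> \<Longrightarrow> - su_pure_loss n p * ln (su_identity_weight n p)
      - (1 - su_pure_loss n p) * ln (1 - su_pure_loss n p) \<le> vN_entropy (su_channel n p \<rho>)"
    using su_channel_entropy_ge[OF n assms] by blast
  show "S_min n p = - su_pure_loss n p * ln (su_identity_weight n p)
      - (1 - su_pure_loss n p) * ln (1 - su_pure_loss n p)"
    using S_min_eq_closed_form[OF n assms] .
next
  have "eventually (\<lambda>n. (- su_pure_loss n p * ln (su_identity_weight n p)
      - (1 - su_pure_loss n p) * ln (1 - su_pure_loss n p)) / ln (real n) = S_min n p / ln (real n))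
      sequentially"
    using eventually_ge_at_top[of 2] by eventually_elim (simp add: S_min_eq_closed_form assms)
  then show "(\<lambda>n. S_min n p / ln (real n)) \<longlonglongrightarrow> p"
    using su_closed_form_over_ln_tendsto[OF assms] by (rule tendsto_cong[THEN iffD1])
qed

end
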